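(* Let $(N,\mathcal{I})$ be a set system, $f:2^N\to\mathbb{R}_{\ge0}$ a normalized monotone submodular function with multilinear extension $F$, $\alpha\in(0,1]$, $\ell$ a positive integer, and fix $T\in\mathcal{I}$. Let $S_1,\dots,S_\ell$ be random sets in $\mathcal{I}$, let $x_0=0$ and $x_i=x_{i-1}+\frac1\ell\mathbf{1}_{S_i}$. For each $i$ define, for $A,B\subseteq N$, $g_i(A)=F(x_{i-1}+\frac1\ell\mathbf{1}_A)-F(x_{i-1})$ and $g_i(A\uplus B)=F(x_{i-1}+\frac1\ell(\mathbf{1}_A+\mathbf{1}_B))-F(x_{i-1})$. Suppose that for each $i$, conditioned on $S_1,\dots,S_{i-1}$, $\mathbb{E}[g_i(S_i)]\ge\alpha\,\mathbb{E}[g_i(S_i\uplus T)-g_i(S_i)]$. Then $x_\ell$ is a convex combination of indicator vectors of $\ell$ sets of $\mathcal{I}$, and $\mathbb{E}[F(x_\ell)]\ge\bigl(1-(1+\alpha/\ell)^{-\ell}\bigr)f(T)\ge(1-2/\ell)(1-e^{-\alpha})f(T)$; in particular, for $\ell\ge2/\varepsilon$, $\mathbb{E}[F(x_\ell)]\ge(1-\varepsilon)(1-e^{-\alpha})f(T)$.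
   Context: $f$ normalized: $f(\emptyset)=0$; monotone: $f(A)\le f(B)$ for $A\subseteq B$; submodular: $f(A)+f(B)\ge f(A\cup B)+f(A\cap B)$. The multilinear extension is $F(x)=\mathbb{E}[f(R)]$ for $x\in\mathbb{R}_{\ge0}^N$, where $R$ contains each $e$ independently with probability $\min\{x_e,1\}$; $\mathbf{1}_A$ is the indicator vector of $A$. *)

theory Defs
  imports "HOL-Probability.Probability"
begin

definition normalized_set_fun :: "('a set \<Rightarrow> real) \<Rightarrow> bool" where
  "normalized_set_fun f \<longleftrightarrow> f {} = 0"

definition monotone_set_fun :: "'a set \<Rightarrow> ('a set \<Rightarrow> real) \<Rightarrow> bool" where
  "monotone_set_fun N f \<longleftrightarrow> (\<forall>A B. A \<subseteq> B \<and> B \<subseteq> N \<longrightarrow> f A \<le> f B)"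

definition submodular_set_fun :: "'a set \<Rightarrow> ('a set \<Rightarrow> real) \<Rightarrow> bool" where
  "submodular_set_fun N f \<longleftrightarrow>
     (\<forall>A B. A \<subseteq> N \<and> B \<subseteq> N \<longrightarrow> f A + f B \<ge> f (A \<union> B) + f (A \<inter> B))"

text \<open>Multilinear extension: F x = E[f R], R contains each e in N independently
  with probability min (x e) 1.\<close>
definition multilinear_ext :: "'a set \<Rightarrow> ('a set \<Rightarrow> real) \<Rightarrow> ('a \<Rightarrow> real) \<Rightarrow> real" where
  "multilinear_ext N f x =
     (\<Sum>R\<in>Pow N. f R * (\<Prod>e\<in>R. min (x e) 1) * (\<Prod>e\<in>N - R. 1 - min (x e) 1))"

definition ind_vec :: "'a set \<Rightarrow> 'a \<Rightarrow> real" where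
  "ind_vec A = (\<lambda>e. if e \<in> A then 1 else 0)"

definition xvec :: "nat \<Rightarrow> 'a set list \<Rightarrow> 'a \<Rightarrow> real" where
  "xvec l hs = (\<lambda>e. \<Sum>S\<leftarrow>hs. (1 / real l) * ind_vec S e)"

text \<open>Joint law of the random history (S_1,...,S_i): S_{i+1} is drawn from the
  conditional distribution step [S_1,...,S_i] given the past.\<close>
fun hist :: "('a set list \<Rightarrow> 'a set pmf) \<Rightarrow> nat \<Rightarrow> 'a set list pmf" where
  "hist step 0 = return_pmf []"
| "hist step (Suc i) = bind_pmf (hist step i) (\<lambda>h. map_pmf (\<lambda>S. h @ [S]) (step h))"

end

theory Submission
  imports Defs
begin

text \<open>
  Put \<open>E\<^sub>i = \<bbbE>[F(x\<^sub>i)]\<close> and \<open>c = 1/\<ell>\<close>. Because \<open>F\<close> is concave along nonnegative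
  directions and dominates \<open>f\<close> on indicator vectors, raising any point \<open>y \<ge> 0\<close> by
  \<open>c\<close> on \<open>T\<close> gains at least \<open>c (f(T) - F(y))\<close>. Fed into the hypothesis on the
  greedy step this yields \<open>E\<^sub>i + \<alpha> c f(T) \<le> (1 + \<alpha> c) E\<^sub>i\<^sub>+\<^sub>1\<close>, so the gap
  \<open>f(T) - E\<^sub>i\<close> shrinks by the factor \<open>1 + \<alpha>/\<ell>\<close> in every round, starting from
  \<open>E\<^sub>0 = f(\<emptyset>) = 0\<close>.
\<close>

definition multilinear_poly :: "'a set \<Rightarrow> ('a set \<Rightarrow> real) \<Rightarrow> ('a \<Rightarrow> real) \<Rightarrow> real" where
  "multilinear_poly N g p = (\<Sum>R\<in>Pow N. g R * (\<Prod>e\<in>R. p e) * (\<Prod>e\<in>N - R. 1 - p e))"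

lemma multilinear_poly_cong:
  "(\<And>e. e \<in> N \<Longrightarrow> p e = q e) \<Longrightarrow> multilinear_poly N g p = multilinear_poly N g q"
  unfolding multilinear_poly_def
  by (intro sum.cong refl arg_cong2[where f="(*)"] prod.cong) auto

lemma multilinear_poly_diff:
  "multilinear_poly N (\<lambda>R. a R - b R) p = multilinear_poly N a p - multilinear_poly N b p"
  unfolding multilinear_poly_def by (simp add: sum_subtractf algebra_simps)

lemma multilinear_poly_uminus: "multilinear_poly N (\<lambda>R. - a R) p = - multilinear_poly N a p"
  unfolding multilinear_poly_def by (simp add: sum_negf)

lemma multilinear_poly_empty: "multilinear_poly {} g p = g {}"
  unfolding multilinear_poly_def by simp

lemma multilinear_poly_insert:
  assumes fin: "finite M" and d: "d \<notin> M"
  shows "multilinear_poly (insert d M) g p =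
           p d * multilinear_poly M (\<lambda>R. g (insert d R)) p + (1 - p d) * multilinear_poly M g p"
proof -
  let ?t = "\<lambda>R. g R * (\<Prod>e\<in>R. p e) * (\<Prod>e\<in>insert d M - R. 1 - p e)"
  have disj: "Pow M \<inter> insert d ` Pow M = {}" using d by auto
  have inj: "inj_on (insert d) (Pow M)"
    using d unfolding inj_on_def by (metis Pow_iff insert_ident subset_iff)
  have without_d: "sum ?t (Pow M) =
      (\<Sum>R\<in>Pow M. (1 - p d) * (g R * (\<Prod>e\<in>R. p e) * (\<Prod>e\<in>M - R. 1 - p e)))"
  proof (rule sum.cong[OF refl])
    fix R assume R: "R \<in> Pow M"
    then have "insert d M - R = insert d (M - R)" "d \<notin> M - R" using d by auto
    then show "?t R = (1 - p d) * (g R * (\<Prod>e\<in>R. p e) * (\<Prod>e\<in>M - R. 1 - p e))"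
      using fin by simp
  qed
  have with_d: "sum ?t (insert d ` Pow M) =
      (\<Sum>R\<in>Pow M. p d * (g (insert d R) * (\<Prod>e\<in>R. p e) * (\<Prod>e\<in>M - R. 1 - p e)))"
    unfolding sum.reindex[OF inj] o_def
  proof (rule sum.cong[OF refl])
    fix R assume R: "R \<in> Pow M"
    then have "insert d M - insert d R = M - R" "finite R" "d \<notin> R"
      using d fin finite_subset by auto
    then show "?t (insert d R) = p d * (g (insert d R) * (\<Prod>e\<in>R. p e) * (\<Prod>e\<in>M - R. 1 - p e))"
      by simp
  qed
  show ?thesis unfolding multilinear_poly_def Pow_insert
    by (subst sum.union_disjoint) (use fin disj in \<open>auto simp: without_d with_d sum_distrib_left\<close>)
qed

lemma multilinear_poly_nonneg:
  assumes "finite N" "\<And>e. e \<in> N \<Longrightarrow> 0 \<le> p e \<and> p e \<le> 1" "\<And>R. R \<subseteq> N \<Longrightarrow> 0 \<le> g R"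
  shows "0 \<le> multilinear_poly N g p"
  unfolding multilinear_poly_def
proof (rule sum_nonneg)
  fix R assume R: "R \<in> Pow N"
  have "0 \<le> (\<Prod>e\<in>R. p e)" "0 \<le> (\<Prod>e\<in>N - R. 1 - p e)"
    using R assms(2) by (auto intro!: prod_nonneg)
  then show "0 \<le> g R * (\<Prod>e\<in>R. p e) * (\<Prod>e\<in>N - R. 1 - p e)" using R assms(3) by simp
qed

lemma abs_multilinear_poly_le:
  assumes "\<And>e. e \<in> N \<Longrightarrow> 0 \<le> p e \<and> p e \<le> 1"
  shows "\<bar>multilinear_poly N g p\<bar> \<le> (\<Sum>R\<in>Pow N. \<bar>g R\<bar>)"
  unfolding multilinear_poly_def
proof (rule order.trans[OF sum_abs], rule sum_mono)
  fix R assume R: "R \<in> Pow N"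
  have a: "\<bar>\<Prod>e\<in>R. p e\<bar> \<le> 1" and b: "\<bar>\<Prod>e\<in>N - R. 1 - p e\<bar> \<le> 1"
    unfolding abs_prod using R assms by (auto intro!: prod_le_1)
  have "\<bar>g R * (\<Prod>e\<in>R. p e) * (\<Prod>e\<in>N - R. 1 - p e)\<bar> =
      \<bar>g R\<bar> * (\<bar>\<Prod>e\<in>R. p e\<bar> * \<bar>\<Prod>e\<in>N - R. 1 - p e\<bar>)"
    by (simp add: abs_mult)
  also have "\<dots> \<le> \<bar>g R\<bar>"
    using mult_left_mono[OF mult_le_one[OF a _ b], of "\<bar>g R\<bar>"] by simp
  finally show "\<bar>g R * (\<Prod>e\<in>R. p e) * (\<Prod>e\<in>N - R. 1 - p e)\<bar> \<le> \<bar>g R\<bar>" .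
qed

lemma multilinear_poly_mono:
  assumes "finite N"
    and "\<And>d R. d \<in> N \<Longrightarrow> R \<subseteq> N - {d} \<Longrightarrow> g R \<le> g (insert d R)"
    and "\<And>e. e \<in> N \<Longrightarrow> 0 \<le> p e \<and> p e \<le> q e \<and> q e \<le> 1"
  shows "multilinear_poly N g p \<le> multilinear_poly N g q"
  using assms
proof (induction N arbitrary: g rule: finite_induct)
  case empty
  then show ?case by (simp add: multilinear_poly_empty)
next
  case (insert d M)
  let ?P = "multilinear_poly M" and ?g' = "\<lambda>R. g (insert d R)"
  note g_mono = insert.prems(1) and pq = insert.prems(2)
  have pqM: "\<And>e. e \<in> M \<Longrightarrow> 0 \<le> p e \<and> p e \<le> q e \<and> q e \<le> 1"
    using pq by blast
  have upper: "?P ?g' p \<le> ?P ?g' q"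
  proof (rule insert.IH[OF _ pqM])
    fix c R assume "c \<in> M" "R \<subseteq> M - {c}"
    then show "?g' R \<le> ?g' (insert c R)"
      using g_mono[of c "insert d R"] insert.hyps(2) by (auto simp: insert_commute)
  qed
  have lower: "?P g p \<le> ?P g q"
    by (rule insert.IH[OF _ pqM]) (use g_mono in blast)
  have lower_le_upper: "?P g p \<le> ?P ?g' p"
  proof -
    have "0 \<le> ?P (\<lambda>R. ?g' R - g R) p"
    proof (rule multilinear_poly_nonneg[OF insert.hyps(1)])
      show "\<And>e. e \<in> M \<Longrightarrow> 0 \<le> p e \<and> p e \<le> 1" using pqM by (meson order_trans)
      show "\<And>R. R \<subseteq> M \<Longrightarrow> 0 \<le> ?g' R - g R" using g_mono insert.hyps(2) by force
    qed
    then show ?thesis by (simp add: multilinear_poly_diff)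
  qed
  have pd: "0 \<le> p d" "p d \<le> q d" "q d \<le> 1" using pq[of d] by simp_all
  have "p d * ?P ?g' p + (1 - p d) * ?P g p \<le> q d * ?P ?g' p + (1 - q d) * ?P g p"
    using mult_left_mono[OF lower_le_upper, of "q d - p d"] pd by (simp add: algebra_simps)
  also have "\<dots> \<le> q d * ?P ?g' q + (1 - q d) * ?P g q"
    using pd by (intro add_mono mult_left_mono upper lower) simp_all
  finally show ?case using multilinear_poly_insert[OF insert.hyps] by simp
qed

lemma multilinear_poly_indicator:
  assumes "finite N" "T \<subseteq> N" "\<And>e. e \<in> N \<Longrightarrow> p e = (if e \<in> T then 1 else 0)"
  shows "multilinear_poly N g p = g T"
  using assms
proof (induction N arbitrary: g T rule: finite_induct)
  case empty
  then show ?case by (simp add: multilinear_poly_empty)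
next
  case (insert d M)
  show ?case
  proof (cases "d \<in> T")
    case True
    have "multilinear_poly M (\<lambda>R. g (insert d R)) p = g (insert d (T - {d}))"
      by (rule insert.IH) (use insert True in auto)
    then show ?thesis using insert True by (simp add: multilinear_poly_insert insert_absorb)
  next
    case False
    have "multilinear_poly M g p = g T"
      by (rule insert.IH) (use insert False in auto)
    then show ?thesis using insert False by (simp add: multilinear_poly_insert)
  qed
qed

lemma multilinear_poly_diff_coordinate:
  assumes fin: "finite N" and e: "e \<in> N" and rs: "\<And>c. c \<in> N - {e} \<Longrightarrow> r c = s c"
  shows "multilinear_poly N g r - multilinear_poly N g s =
           (r e - s e) * multilinear_poly (N - {e}) (\<lambda>R. g (insert e R) - g R) r"
proof -
  let ?P = "multilinear_poly (N - {e})"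
  have N: "insert e (N - {e}) = N" using e by auto
  have fin': "finite (N - {e})" using fin by simp
  have s_eq_r: "?P h s = ?P h r" for h
    by (rule multilinear_poly_cong) (use rs in auto)
  have split: "multilinear_poly N g t = t e * ?P (\<lambda>R. g (insert e R)) t + (1 - t e) * ?P g t" for t
    using multilinear_poly_insert[OF fin', of e g t] unfolding N by simp
  have "multilinear_poly N g r - multilinear_poly N g s =
      (r e - s e) * (?P (\<lambda>R. g (insert e R)) r - ?P g r)"
    unfolding split[of r] split[of s] s_eq_r by (simp add: algebra_simps)
  then show ?thesis by (simp add: multilinear_poly_diff)
qed

lemma monotone_set_funD: "monotone_set_fun N f \<Longrightarrow> A \<subseteq> B \<Longrightarrow> B \<subseteq> N \<Longrightarrow> f A \<le> f B"
  unfolding monotone_set_fun_def by simp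

lemma submodular_marginal_antitone:
  assumes subm: "submodular_set_fun N f" and "d \<in> N" "c \<in> N - {d}" "R \<subseteq> N - {d} - {c}"
  shows "f (insert c (insert d R)) - f (insert c R) \<le> f (insert d R) - f R"
proof -
  have "f (insert c R \<union> insert d R) + f (insert c R \<inter> insert d R) \<le> f (insert c R) + f (insert d R)"
    using subm assms(2-4) unfolding submodular_set_fun_def by (meson insert_subset subset_iff Diff_subset)
  moreover have "insert c R \<union> insert d R = insert c (insert d R)" by blast
  moreover have "insert c R \<inter> insert d R = R" using assms(3,4) by blast
  ultimately show ?thesis by simp
qed

lemma multilinear_poly_marginal_antitone:
  assumes fin: "finite N" and subm: "submodular_set_fun N f" and e: "e \<in> N"
    and pq: "\<And>c. c \<in> N - {e} \<Longrightarrow> 0 \<le> p c \<and> p c \<le> q c \<and> q c \<le> 1"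
  shows "multilinear_poly (N - {e}) (\<lambda>R. f (insert e R) - f R) q \<le>
         multilinear_poly (N - {e}) (\<lambda>R. f (insert e R) - f R) p"
proof -
  have "multilinear_poly (N - {e}) (\<lambda>R. - (f (insert e R) - f R)) p \<le>
        multilinear_poly (N - {e}) (\<lambda>R. - (f (insert e R) - f R)) q"
  proof (rule multilinear_poly_mono[OF _ _ pq])
    fix c R assume "c \<in> N - {e}" "R \<subseteq> N - {e} - {c}"
    then show "- (f (insert e R) - f R) \<le> - (f (insert e (insert c R)) - f (insert c R))"
      using submodular_marginal_antitone[OF subm e, of c R] by (simp add: insert_commute)
  qed (use fin in simp)
  then show ?thesis by (simp only: multilinear_poly_uminus neg_le_iff_le)
qed

lemma multilinear_poly_marginal_nonneg:
  assumes fin: "finite N" and mono: "monotone_set_fun N f" and e: "e \<in> N"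
    and p: "\<And>c. c \<in> N - {e} \<Longrightarrow> 0 \<le> p c \<and> p c \<le> 1"
  shows "0 \<le> multilinear_poly (N - {e}) (\<lambda>R. f (insert e R) - f R) p"
  by (rule multilinear_poly_nonneg[OF _ p])
     (use fin e monotone_set_funD[OF mono] in \<open>auto intro: subset_insertI\<close>)

text \<open>
  One coordinate
  is handled at a time; its gain is linear in the coordinate with a slope that,
  by submodularity, only decreases as the other coordinates grow.
\<close>
lemma multilinear_poly_raise_on_set:
  assumes fin: "finite N" and mono: "monotone_set_fun N f" and subm: "submodular_set_fun N f"
    and \<epsilon>: "0 \<le> \<epsilon>" and T: "T \<subseteq> N"
    and p: "\<And>e. e \<in> N \<Longrightarrow> 0 \<le> p e \<and> p e \<le> 1"
    and q: "\<And>e. e \<in> N \<Longrightarrow> 0 \<le> q e \<and> q e \<le> 1"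
    and q_outside: "\<And>e. e \<in> N - T \<Longrightarrow> q e = p e"
    and q_inside: "\<And>e. e \<in> T \<Longrightarrow> p e + \<epsilon> * (1 - p e) \<le> q e"
  shows "\<epsilon> * (multilinear_poly N f (\<lambda>e. if e \<in> T then 1 else p e) - multilinear_poly N f p)
           \<le> multilinear_poly N f q - multilinear_poly N f p"
  using T q q_outside q_inside
proof (induction T arbitrary: q rule: infinite_finite_induct)
  case (infinite T)
  then show ?case using fin finite_subset by blast
next
  case empty
  have "multilinear_poly N f q = multilinear_poly N f p"
    by (rule multilinear_poly_cong) (use empty in auto)
  then show ?case by simp
next
  case (insert e T)
  let ?P = "multilinear_poly N f"
  let ?D = "multilinear_poly (N - {e}) (\<lambda>R. f (insert e R) - f R)"
  define q' where "q' = q(e := p e)"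
  define pT where "pT = (\<lambda>c. if c \<in> T then 1 else p c)"
  have eN: "e \<in> N" using insert by auto
  have pe: "0 \<le> p e" "p e \<le> 1" using p[OF eN] by auto
  have qe: "p e + \<epsilon> * (1 - p e) \<le> q e" using insert.prems(4) by simp
  have IH: "\<epsilon> * (?P pT - ?P p) \<le> ?P q' - ?P p"
    unfolding pT_def q'_def by (rule insert.IH) (use insert.prems insert.hyps p in auto)
  have raise_q: "?P q - ?P q' = (q e - p e) * ?D q"
    using multilinear_poly_diff_coordinate[OF fin eN, of q q'] by (simp add: q'_def)
  have raise_pT: "?P (\<lambda>c. if c \<in> insert e T then 1 else p c) - ?P pT = (1 - p e) * ?D pT"
  proof -
    have "?D (\<lambda>c. if c \<in> insert e T then 1 else p c) = ?D pT"
      by (rule multilinear_poly_cong) (auto simp: pT_def)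
    then show ?thesis
      using multilinear_poly_diff_coordinate[OF fin eN, of "\<lambda>c. if c \<in> insert e T then 1 else p c" pT]
        insert.hyps by (simp add: pT_def)
  qed
  have "?D pT \<le> ?D q"
  proof (rule multilinear_poly_marginal_antitone[OF fin subm eN])
    fix c assume "c \<in> N - {e}"
    then show "0 \<le> q c \<and> q c \<le> pT c \<and> pT c \<le> 1"
      using p[of c] insert.prems(2,3)[of c] by (auto simp: pT_def)
  qed
  moreover have "0 \<le> ?D pT"
    by (rule multilinear_poly_marginal_nonneg[OF fin mono eN]) (use p in \<open>auto simp: pT_def\<close>)
  moreover have "0 \<le> \<epsilon> * (1 - p e)" using \<epsilon> pe by simp
  ultimately have "\<epsilon> * (1 - p e) * ?D pT \<le> (q e - p e) * ?D q"
    using qe by (intro mult_mono) auto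
  then have "\<epsilon> * (?P (\<lambda>c. if c \<in> insert e T then 1 else p c) - ?P pT) \<le> ?P q - ?P q'"
    using raise_q raise_pT by (simp add: mult.assoc)
  with IH show ?case unfolding pT_def by (simp add: algebra_simps)
qed

definition cap_one :: "('a \<Rightarrow> real) \<Rightarrow> 'a \<Rightarrow> real" where
  "cap_one x = (\<lambda>e. min (x e) 1)"

lemma multilinear_ext_eq_poly: "multilinear_ext N f x = multilinear_poly N f (cap_one x)"
  unfolding multilinear_ext_def multilinear_poly_def cap_one_def by simp

lemma cap_one_nonneg_le_one: "(\<And>e. 0 \<le> x e) \<Longrightarrow> 0 \<le> cap_one x e \<and> cap_one x e \<le> 1"
  by (simp add: cap_one_def)

lemma min_one_add_ge:
  fixes y \<epsilon> :: real
  assumes "0 \<le> y" "0 \<le> \<epsilon>" "\<epsilon> \<le> 1"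
  shows "min y 1 + \<epsilon> * (1 - min y 1) \<le> min (y + \<epsilon>) 1"
proof (cases "y \<le> 1")
  case True
  have "\<epsilon> * (1 - y) \<le> \<epsilon>" "\<epsilon> * (1 - y) \<le> 1 - y"
    using assms True by (simp_all add: mult_left_le mult_left_le_one_le)
  then show ?thesis using True by (simp add: min_def)
qed (use assms in \<open>simp add: min_def\<close>)

lemma multilinear_ext_indicator: "finite N \<Longrightarrow> T \<subseteq> N \<Longrightarrow> multilinear_ext N f (ind_vec T) = f T"
  unfolding multilinear_ext_eq_poly
  by (rule multilinear_poly_indicator) (auto simp: cap_one_def ind_vec_def)

lemma multilinear_ext_add_indicator_ge:
  assumes fin: "finite N" and mono: "monotone_set_fun N f" and subm: "submodular_set_fun N f"
    and T: "T \<subseteq> N" and y: "\<And>e. 0 \<le> y e" and \<epsilon>: "0 \<le> \<epsilon>" "\<epsilon> \<le> 1"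
  shows "\<epsilon> * (f T - multilinear_ext N f y)
           \<le> multilinear_ext N f (\<lambda>e. y e + \<epsilon> * ind_vec T e) - multilinear_ext N f y"
proof -
  let ?p = "cap_one y" and ?q = "cap_one (\<lambda>e. y e + \<epsilon> * ind_vec T e)"
  let ?pT = "\<lambda>e. if e \<in> T then 1 else ?p e"
  have "f T = multilinear_poly N f (\<lambda>e. if e \<in> T then 1 else 0)"
    by (rule multilinear_poly_indicator[OF fin T, symmetric]) simp
  also have "\<dots> \<le> multilinear_poly N f ?pT"
  proof (rule multilinear_poly_mono[OF fin])
    show "\<And>d R. d \<in> N \<Longrightarrow> R \<subseteq> N - {d} \<Longrightarrow> f R \<le> f (insert d R)"
      by (rule monotone_set_funD[OF mono]) auto
  qed (use y in \<open>auto simp: cap_one_def\<close>)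
  finally have "\<epsilon> * (f T - multilinear_poly N f ?p) \<le> \<epsilon> * (multilinear_poly N f ?pT - multilinear_poly N f ?p)"
    using \<epsilon> by (intro mult_left_mono) auto
  also have "\<dots> \<le> multilinear_poly N f ?q - multilinear_poly N f ?p"
  proof (rule multilinear_poly_raise_on_set[OF fin mono subm \<epsilon>(1) T])
    show "\<And>e. e \<in> T \<Longrightarrow> ?p e + \<epsilon> * (1 - ?p e) \<le> ?q e"
      using min_one_add_ge[OF y \<epsilon>] by (simp add: cap_one_def ind_vec_def)
  qed (use y \<epsilon> in \<open>auto simp: cap_one_def ind_vec_def\<close>)
  finally show ?thesis by (simp add: multilinear_ext_eq_poly)
qed

lemma abs_multilinear_ext_le:
  "(\<And>e. 0 \<le> x e) \<Longrightarrow> \<bar>multilinear_ext N f x\<bar> \<le> (\<Sum>R\<in>Pow N. \<bar>f R\<bar>)"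
  unfolding multilinear_ext_eq_poly by (rule abs_multilinear_poly_le) (rule cap_one_nonneg_le_one)

lemma integrable_multilinear_ext:
  assumes "\<And>S e. 0 \<le> x S e"
  shows "integrable (measure_pmf M) (\<lambda>S. multilinear_ext N f (x S))"
  by (rule measure_pmf.integrable_const_bound[where B="\<Sum>R\<in>Pow N. \<bar>f R\<bar>"])
     (auto intro: abs_multilinear_ext_le assms)

lemma greedy_step_gain:
  fixes N :: "'a set" and f :: "'a set \<Rightarrow> real" and M :: "'a set pmf"
  defines "F \<equiv> multilinear_ext N f"
  assumes fin: "finite N" and mono: "monotone_set_fun N f" and subm: "submodular_set_fun N f"
    and T: "T \<subseteq> N" and x: "\<And>e. 0 \<le> x e" and c: "0 \<le> c" "c \<le> 1" and \<alpha>: "0 \<le> \<alpha>"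
    and cond: "measure_pmf.expectation M (\<lambda>S. F (\<lambda>e. x e + c * ind_vec S e) - F x)
        \<ge> \<alpha> * measure_pmf.expectation M
          (\<lambda>S. (F (\<lambda>e. x e + c * (ind_vec S e + ind_vec T e)) - F x)
              - (F (\<lambda>e. x e + c * ind_vec S e) - F x))"
  shows "F x + \<alpha> * c * f T
           \<le> (1 + \<alpha> * c) * measure_pmf.expectation M (\<lambda>S. F (\<lambda>e. x e + c * ind_vec S e))"
proof -
  define y where "y S = (\<lambda>e. x e + c * ind_vec S e)" for S
  define z where "z S = (\<lambda>e. x e + c * (ind_vec S e + ind_vec T e))" for S
  define Y where "Y = measure_pmf.expectation M (\<lambda>S. F (y S))"
  have "0 \<le> y S e" "0 \<le> z S e" for S e
    using x c by (simp_all add: y_def z_def ind_vec_def)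
  then have int_y: "integrable M (\<lambda>S. F (y S))" and int_z: "integrable M (\<lambda>S. F (z S))"
    unfolding F_def by (simp_all add: integrable_multilinear_ext)
  have gain: "c * (f T - F (y S)) \<le> F (z S) - F (y S)" for S
  proof -
    have "z S = (\<lambda>e. y S e + c * ind_vec T e)" by (simp add: y_def z_def fun_eq_iff algebra_simps)
    then show ?thesis
      unfolding F_def using multilinear_ext_add_indicator_ge[OF fin mono subm T _ c] \<open>\<And>S e. 0 \<le> y S e\<close>
      by simp
  qed
  have "c * (f T - Y) = measure_pmf.expectation M (\<lambda>S. c * (f T - F (y S)))"
    by (simp add: Y_def int_y)
  also have "\<dots> \<le> measure_pmf.expectation M (\<lambda>S. (F (z S) - F x) - (F (y S) - F x))"
    by (intro integral_mono) (simp_all add: int_y int_z gain)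
  finally have "\<alpha> * (c * (f T - Y)) \<le> \<alpha> * measure_pmf.expectation M (\<lambda>S. (F (z S) - F x) - (F (y S) - F x))"
    using \<alpha> by (rule mult_left_mono)
  also have "\<dots> \<le> measure_pmf.expectation M (\<lambda>S. F (y S) - F x)"
    using cond unfolding y_def z_def .
  also have "\<dots> = Y - F x"
    by (simp add: Y_def int_y)
  finally show ?thesis by (simp add: Y_def y_def algebra_simps)
qed

lemma one_minus_inverse_power_ge:
  fixes a :: real and l :: nat
  assumes a: "0 < a" "a \<le> 1" and l: "0 < l"
  shows "(1 - 2 / real l) * (1 - exp (- a)) \<le> 1 - inverse ((1 + a / real l) ^ l)"
proof (cases "l = 1")
  case True
  have "(1 - 2 / real l) * (1 - exp (- a)) = exp (- a) - 1" "(1 + a / real l) ^ l = 1 + a"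
    using True by simp_all
  moreover have "exp (- a) \<le> 1" "inverse (1 + a) \<le> 1" using a by (simp_all add: inverse_le_1_iff)
  ultimately show ?thesis by (simp only:)
next
  case False
  then have l2: "2 \<le> real l" using l by linarith
  define t where "t = a / real l"
  define z where "z = a\<^sup>2 / real l"
  define E where "E = exp (- a)"
  have t: "0 \<le> t" "t \<le> 1" using a l2 by (auto simp: t_def field_simps)
  have z: "0 \<le> z" "z \<le> 1/2"
    using l2 power_le_one[of a 2] a by (auto simp: z_def field_simps)
  have "a - z = real l * (t - t\<^sup>2)" using l by (simp add: t_def z_def field_simps power2_eq_square)
  also have "\<dots> \<le> real l * ln (1 + t)"
    using ln_one_plus_pos_lower_bound[OF t] by (intro mult_left_mono) auto
  moreover have "(1 + t) ^ l = exp (real l * ln (1 + t))"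
    using t by (simp add: exp_of_nat_mult)
  ultimately have "exp (a - z) \<le> (1 + t) ^ l" by simp
  then have "inverse ((1 + t) ^ l) \<le> exp (- a + z)"
    using le_imp_inverse_le[of "exp (a - z)"] by (simp add: exp_minus[symmetric])
  also have "\<dots> = E * exp z" unfolding E_def by (rule exp_add)
  also have "\<dots> \<le> E * (1 + 2 * z)"
    using exp_bound_lemma[of z] z by (simp add: E_def)
  finally have inv_le: "inverse ((1 + t) ^ l) \<le> E * (1 + 2 * z)" .
  have "a\<^sup>2 * E \<le> 1 - E"
  proof -
    have "E * (1 + a) \<le> 1"
      using mult_left_mono[OF exp_ge_add_one_self[of a], of E] by (simp add: E_def exp_minus field_simps)
    moreover have "a\<^sup>2 * E \<le> a * E"
      using a by (intro mult_right_mono) (auto simp: E_def power2_eq_square mult_left_le)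
    ultimately show ?thesis by (simp add: algebra_simps)
  qed
  then have "(1 - 2 / real l) * (1 - E) \<le> 1 - E * (1 + 2 * z)"
    using l2 mult_left_mono[of "a\<^sup>2 * E" "1 - E" "2 / real l"] by (simp add: z_def algebra_simps)
  with inv_le show ?thesis unfolding t_def E_def by simp
qed

lemma gap_geometric_decay:
  fixes E :: "nat \<Rightarrow> real"
  assumes c: "0 \<le> c" and E0: "E 0 = 0"
    and progress: "\<And>i. i < n \<Longrightarrow> E i + c * v \<le> (1 + c) * E (Suc i)"
  shows "(1 - inverse ((1 + c) ^ n)) * v \<le> E n"
proof -
  have "v - E i \<le> v / (1 + c) ^ i" if "i \<le> n" for i
    using that
  proof (induction i)
    case (Suc i)
    have "(1 + c) * (v - E (Suc i)) \<le> v - E i" using progress[of i] Suc.prems by (simp add: algebra_simps)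
    also have "\<dots> \<le> v / (1 + c) ^ i" using Suc by simp
    finally have "v - E (Suc i) \<le> v / (1 + c) ^ i / (1 + c)"
      using c by (simp add: pos_le_divide_eq ac_simps)
    then show ?case by (simp add: divide_divide_eq_left mult.commute)
  qed (simp add: E0)
  then show ?thesis by (simp add: algebra_simps divide_inverse)
qed

lemma expectation_bind_pmf:
  fixes G :: "'b \<Rightarrow> real"
  assumes bnd: "\<And>x. \<bar>G x\<bar> \<le> B"
  shows "measure_pmf.expectation (bind_pmf M K) G =
           measure_pmf.expectation M (\<lambda>x. measure_pmf.expectation (K x) G)"
  unfolding measure_pmf_bind
proof (rule integral_bind[where K="count_space UNIV" and B=B and B'=1])
  show "(\<lambda>x. measure_pmf (K x)) \<in> measurable (measure_pmf M) (subprob_algebra (count_space UNIV))"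
    using measurable_measure_pmf[of K] by simp
qed (simp_all add: bnd measure_pmf.emeasure_space_1 measure_pmf.finite_measure_axioms)

lemma abs_expectation_le:
  fixes G :: "'b \<Rightarrow> real"
  assumes bnd: "\<And>x. \<bar>G x\<bar> \<le> B"
  shows "\<bar>measure_pmf.expectation M G\<bar> \<le> B"
proof -
  have int: "integrable M G"
    by (rule measure_pmf.integrable_const_bound[where B=B]) (use bnd in auto)
  have "measure_pmf.expectation M G \<le> B"
    by (rule measure_pmf.integral_le_const[OF int]) (use bnd abs_le_D1 in auto)
  moreover have "- B \<le> measure_pmf.expectation M G"
  proof (rule measure_pmf.integral_ge_const[OF int], intro AE_pmfI)
    show "- B \<le> G x" for x using bnd[of x] by linarith
  qed
  ultimately show ?thesis by simp
qed

lemma expectation_hist_Suc: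
  fixes G :: "'a set list \<Rightarrow> real"
  assumes "\<And>h. \<bar>G h\<bar> \<le> B"
  shows "measure_pmf.expectation (hist step (Suc i)) G =
           measure_pmf.expectation (hist step i) (\<lambda>h. measure_pmf.expectation (step h) (\<lambda>S. G (h @ [S])))"
  using expectation_bind_pmf[of G B "hist step i" "\<lambda>h. map_pmf (\<lambda>S. h @ [S]) (step h)"] assms
  by simp

lemma set_pmf_hist:
  assumes "\<And>j h. j < i \<Longrightarrow> h \<in> set_pmf (hist step j) \<Longrightarrow> set_pmf (step h) \<subseteq> \<I>"
    and "h \<in> set_pmf (hist step i)"
  shows "length h = i \<and> set h \<subseteq> \<I>"
  using assms
proof (induction i arbitrary: h)
  case (Suc i)
  then obtain h' S where h': "h' \<in> set_pmf (hist step i)" and "S \<in> set_pmf (step h')"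
    and h: "h = h' @ [S]"
    by auto
  moreover have "length h' = i \<and> set h' \<subseteq> \<I>"
    by (rule Suc.IH[OF _ h']) (use Suc.prems(1) less_SucI in blast)
  moreover have "set_pmf (step h') \<subseteq> \<I>" using Suc.prems(1)[OF lessI h'] .
  ultimately show ?case by auto
qed simp

lemma xvec_nonneg: "0 \<le> xvec l h e"
  unfolding xvec_def by (intro sum_list_nonneg) (auto simp: ind_vec_def)

lemma xvec_snoc: "xvec l (h @ [S]) = (\<lambda>e. xvec l h e + 1 / real l * ind_vec S e)"
  unfolding xvec_def by simp

lemma xvec_Nil: "xvec l [] = ind_vec {}"
  unfolding xvec_def ind_vec_def by simp

lemma expectation_hist_progress:
  fixes N :: "'a set" and f :: "'a set \<Rightarrow> real" and step :: "'a set list \<Rightarrow> 'a set pmf"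
  defines "F \<equiv> multilinear_ext N f"
  assumes fin: "finite N" and mono: "monotone_set_fun N f" and subm: "submodular_set_fun N f"
    and T: "T \<subseteq> N" and \<alpha>: "0 \<le> \<alpha>"
    and cond: "\<And>h. h \<in> set_pmf (hist step i) \<Longrightarrow>
        measure_pmf.expectation (step h)
          (\<lambda>S. F (\<lambda>e. xvec l h e + (1 / real l) * ind_vec S e) - F (xvec l h))
        \<ge> \<alpha> * measure_pmf.expectation (step h)
          (\<lambda>S. (F (\<lambda>e. xvec l h e + (1 / real l) * (ind_vec S e + ind_vec T e)) - F (xvec l h))
              - (F (\<lambda>e. xvec l h e + (1 / real l) * ind_vec S e) - F (xvec l h)))"
  shows "measure_pmf.expectation (hist step i) (\<lambda>h. F (xvec l h)) + \<alpha> / real l * f T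
           \<le> (1 + \<alpha> / real l) * measure_pmf.expectation (hist step (Suc i)) (\<lambda>h. F (xvec l h))"
proof -
  have c: "0 \<le> 1 / real l" "1 / real l \<le> 1" by (cases "l = 0") (auto simp: divide_le_eq_1)
  define B where "B = (\<Sum>R\<in>Pow N. \<bar>f R\<bar>)"
  define Y where "Y h = measure_pmf.expectation (step h) (\<lambda>S. F (xvec l (h @ [S])))" for h
  have F_bounded: "\<bar>F (xvec l h)\<bar> \<le> B" for h
    unfolding F_def B_def by (rule abs_multilinear_ext_le) (rule xvec_nonneg)
  have int_F: "integrable (hist step i) (\<lambda>h. F (xvec l h))"
    unfolding F_def by (rule integrable_multilinear_ext) (rule xvec_nonneg)
  have int_Y: "integrable (hist step i) Y"
    by (rule measure_pmf.integrable_const_bound[where B=B])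
       (auto simp: Y_def intro: abs_expectation_le F_bounded)
  have "F (xvec l h) + \<alpha> / real l * f T \<le> (1 + \<alpha> / real l) * Y h"
    if "h \<in> set_pmf (hist step i)" for h
    using greedy_step_gain[OF fin mono subm T xvec_nonneg c \<alpha> cond[OF that, unfolded F_def]]
    by (simp add: Y_def F_def xvec_snoc)
  then have "measure_pmf.expectation (hist step i) (\<lambda>h. F (xvec l h) + \<alpha> / real l * f T)
      \<le> measure_pmf.expectation (hist step i) (\<lambda>h. (1 + \<alpha> / real l) * Y h)"
    by (intro integral_mono_AE AE_pmfI) (simp_all add: int_F int_Y)
  moreover have "measure_pmf.expectation (hist step (Suc i)) (\<lambda>h. F (xvec l h))
      = measure_pmf.expectation (hist step i) Y"
    unfolding Y_def by (rule expectation_hist_Suc) (rule F_bounded)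
  ultimately show ?thesis by (simp add: int_F)
qed

theorem mainTheorem12:
  fixes N :: "'a set" and \<I> :: "'a set set" and f :: "'a set \<Rightarrow> real"
    and \<alpha> :: real and l :: nat and T :: "'a set"
    and step :: "'a set list \<Rightarrow> 'a set pmf"
  defines "F \<equiv> multilinear_ext N f"
  assumes finN: "finite N"
    and sys: "\<I> \<subseteq> Pow N"
    and fnn: "\<forall>A\<subseteq>N. f A \<ge> 0"
    and norm: "normalized_set_fun f"
    and mono: "monotone_set_fun N f"
    and subm: "submodular_set_fun N f"
    and alpha: "0 < \<alpha>" "\<alpha> \<le> 1"
    and lpos: "l > 0"
    and T: "T \<in> \<I>"
    and inI: "\<forall>i<l. \<forall>h\<in>set_pmf (hist step i). set_pmf (step h) \<subseteq> \<I>"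
    and cond: "\<forall>i<l. \<forall>h\<in>set_pmf (hist step i).
        measure_pmf.expectation (step h)
          (\<lambda>S. F (\<lambda>e. xvec l h e + (1 / real l) * ind_vec S e) - F (xvec l h))
        \<ge> \<alpha> * measure_pmf.expectation (step h)
          (\<lambda>S. (F (\<lambda>e. xvec l h e + (1 / real l) * (ind_vec S e + ind_vec T e)) - F (xvec l h))
              - (F (\<lambda>e. xvec l h e + (1 / real l) * ind_vec S e) - F (xvec l h)))"
  shows "(\<forall>h\<in>set_pmf (hist step l). length h = l \<and> set h \<subseteq> \<I> \<and>
            xvec l h = (\<lambda>e. \<Sum>S\<leftarrow>h. (1 / real l) * ind_vec S e))
     \<and> measure_pmf.expectation (hist step l) (\<lambda>h. F (xvec l h))
         \<ge> (1 - inverse ((1 + \<alpha> / real l) ^ l)) * f T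
     \<and> (1 - inverse ((1 + \<alpha> / real l) ^ l)) * f T
         \<ge> (1 - 2 / real l) * (1 - exp (- \<alpha>)) * f T
     \<and> (\<forall>\<epsilon>>0. real l \<ge> 2 / \<epsilon> \<longrightarrow>
         measure_pmf.expectation (hist step l) (\<lambda>h. F (xvec l h))
           \<ge> (1 - \<epsilon>) * (1 - exp (- \<alpha>)) * f T)"
proof -
  have TN: "T \<subseteq> N" using T sys by blast
  define E where "E i = measure_pmf.expectation (hist step i) (\<lambda>h. F (xvec l h))" for i
  have progress: "E i + \<alpha> / real l * f T \<le> (1 + \<alpha> / real l) * E (Suc i)" if "i < l" for i
    unfolding E_def F_def
    by (rule expectation_hist_progress[OF finN mono subm TN])
       (use alpha cond that in \<open>auto simp: F_def\<close>)
  have E0: "E 0 = 0"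
    using norm multilinear_ext_indicator[OF finN, of "{}" f]
    by (simp add: E_def F_def xvec_Nil normalized_set_fun_def)
  have lower: "(1 - inverse ((1 + \<alpha> / real l) ^ l)) * f T \<le> E l"
    by (rule gap_geometric_decay[OF _ E0 progress]) (use alpha in simp)
  have "(1 - 2 / real l) * (1 - exp (- \<alpha>)) * f T \<le> (1 - inverse ((1 + \<alpha> / real l) ^ l)) * f T"
    using one_minus_inverse_power_ge[OF alpha lpos] fnn TN by (intro mult_right_mono) auto
  moreover have "(1 - \<epsilon>) * (1 - exp (- \<alpha>)) * f T \<le> (1 - 2 / real l) * (1 - exp (- \<alpha>)) * f T"
    if "0 < \<epsilon>" "2 / \<epsilon> \<le> real l" for \<epsilon>
    using that lpos alpha fnn TN by (intro mult_right_mono) (auto simp: field_simps)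
  moreover have "\<forall>h\<in>set_pmf (hist step l). length h = l \<and> set h \<subseteq> \<I>"
    using set_pmf_hist[of l step \<I>] inI by blast
  ultimately show ?thesis using lower unfolding E_def xvec_def by force
qed

end
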